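(* Let $n\ge5$ and let $f(x)=x^n+a_2x^{n-2}+a_3x^{n-3}+\dots+a_{n-1}x+a_n$ be a polynomial (with zero coefficient of $x^{n-1}$) all of whose roots are real. Then $$\operatorname{spn}(f)\ge\Big(\frac{432}{n^3}\big(4(2-n)a_2^3-9na_3^2+8na_2a_4\big)\Big)^{1/6}.$$
   Context: If $x_1,\dots,x_n$ are the roots of $f$, the span of $f$ is $\operatorname{spn}(f)=\max_{i,j}|x_i-x_j|$. *)

theory Defs
  imports "HOL-Analysis.Analysis" "HOL-Computational_Algebra.Polynomial"
begin

definition all_roots_real :: "real poly \<Rightarrow> bool" where
  "all_roots_real f \<longleftrightarrow>
     (\<forall>z::complex. poly (map_poly complex_of_real f) z = 0 \<longrightarrow> z \<in> \<real>)"

definition spn :: "real poly \<Rightarrow> real" where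
  "spn f = Max {\<bar>x - y\<bar> | x y. poly f x = 0 \<and> poly f y = 0}"

end

theory Submission
  imports Defs "HOL-Computational_Algebra.Fundamental_Theorem_Algebra"
begin

text \<open>
  Write \<open>f = \<Prod>(X - r\<^sub>i)\<close> and \<open>p\<^sub>k = \<Sum> r\<^sub>i\<^sup>k\<close>. By Newton's identities,
  with \<open>p\<^sub>1 = 0\<close>, the radicand equals \<open>432 (n p\<^sub>2 p\<^sub>4 - n p\<^sub>3\<^sup>2 - p\<^sub>2\<^sup>3) / n\<^sup>3\<close>. The bracket is
  the Gram determinant of the vectors \<open>1, r, r\<^sup>2\<close> in \<open>\<real>\<^sup>n\<close>, hence at most \<open>n p\<^sub>2\<close> times the
  squared distance from \<open>r\<^sup>2\<close> to any combination of \<open>1\<close> and \<open>r\<close>. Taking the vector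
  \<open>y\<^sub>i = (r\<^sub>i - M)\<^sup>2\<close> minus its mean, where \<open>M\<close> is the midpoint of the roots and \<open>h\<close> half the
  span, gives the bound \<open>S\<^sup>2 (n h\<^sup>2 - S)\<close> with \<open>S = \<Sum> y\<^sub>i \<ge> p\<^sub>2\<close>, since \<open>0 \<le> y\<^sub>i \<le> h\<^sup>2\<close>; the
  maximum \<open>4 n\<^sup>3 h\<^sup>6 / 27\<close> of this cubic in \<open>S\<close> is exactly \<open>n\<^sup>3 spn(f)\<^sup>6 / 432\<close>.
\<close>

lemma gram_determinant_power_sums_le:
  fixes x :: "'a \<Rightarrow> real"
  assumes "(\<Sum>i\<in>A. x i) = 0"
  defines "N \<equiv> real (card A)" and "p \<equiv> \<lambda>k. \<Sum>i\<in>A. x i ^ k"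
  shows "N * p 2 * p 4 - N * p 3 ^ 2 - p 2 ^ 3 \<le> N * p 2 * (\<Sum>i\<in>A. (x i ^ 2 + b * x i + c) ^ 2)"
proof -
  have "(\<Sum>i\<in>A. (x i ^ 2 + b * x i + c) ^ 2)
      = (\<Sum>i\<in>A. x i ^ 4 + 2 * b * x i ^ 3 + (b ^ 2 + 2 * c) * x i ^ 2 + 2 * b * c * x i + c ^ 2)"
    by (rule sum.cong) (simp_all add: power2_eq_square power3_eq_cube power4_eq_xxxx algebra_simps)
  also have "\<dots> = p 4 + 2 * b * p 3 + (b ^ 2 + 2 * c) * p 2 + N * c ^ 2"
    using assms(1) unfolding p_def N_def by (simp add: sum.distrib sum_distrib_left flip: sum_distrib_left)
  finally have Q: "(\<Sum>i\<in>A. (x i ^ 2 + b * x i + c) ^ 2) = p 4 + 2 * b * p 3 + (b ^ 2 + 2 * c) * p 2 + N * c ^ 2" .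
  have "0 \<le> p 2"
    unfolding p_def by (simp add: sum_nonneg)
  then have "0 \<le> N * (p 3 + b * p 2) ^ 2 + p 2 * (N * c + p 2) ^ 2"
    unfolding N_def by simp
  then show ?thesis
    unfolding Q by (simp add: power2_eq_square power3_eq_cube algebra_simps)
qed

lemma sum_square_deviation_le:
  fixes y :: "'a \<Rightarrow> real"
  assumes "\<And>i. i \<in> A \<Longrightarrow> 0 \<le> y i \<and> y i \<le> H"
  defines "N \<equiv> real (card A)" and "S \<equiv> \<Sum>i\<in>A. y i"
  shows "(\<Sum>i\<in>A. (y i - S / N) ^ 2) \<le> H * S - S ^ 2 / N"
proof -
  have squares: "(\<Sum>i\<in>A. y i ^ 2) \<le> H * S"
    unfolding S_def sum_distrib_left
    using assms(1) by (intro sum_mono) (simp add: power2_eq_square mult_right_mono)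
  have "(\<Sum>i\<in>A. (y i - S / N) ^ 2) = (\<Sum>i\<in>A. y i ^ 2 - 2 * (S / N) * y i + (S / N) ^ 2)"
    by (rule sum.cong) (simp_all add: power2_eq_square algebra_simps)
  also have "\<dots> = (\<Sum>i\<in>A. y i ^ 2) - 2 * (S / N) * S + N * (S / N) ^ 2"
    unfolding S_def N_def by (simp add: sum.distrib sum_subtractf sum_distrib_left)
  also have "\<dots> = (\<Sum>i\<in>A. y i ^ 2) - S ^ 2 / N"
    by (cases "N = 0") (simp_all add: field_simps power2_eq_square)
  finally show ?thesis
    using squares by simp
qed

lemma square_mult_complement_le:
  fixes s a :: real
  assumes "0 \<le> s" "0 \<le> a"
  shows "s ^ 2 * (a - s) \<le> 4 * a ^ 3 / 27"
proof -
  have "4 * a ^ 3 / 27 - s ^ 2 * (a - s) = (s - 2 * a / 3) ^ 2 * (s + a / 3)"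
    by (simp add: field_simps power2_eq_square power3_eq_cube)
  also have "\<dots> \<ge> 0"
    using assms by simp
  finally show ?thesis by simp
qed

lemma power_sums_spread_bound:
  fixes x :: "'a \<Rightarrow> real"
  assumes "finite A" "A \<noteq> {}" and centered: "(\<Sum>i\<in>A. x i) = 0"
    and bounds: "\<And>i. i \<in> A \<Longrightarrow> u \<le> x i \<and> x i \<le> v"
  defines "N \<equiv> real (card A)" and "p \<equiv> \<lambda>k. \<Sum>i\<in>A. x i ^ k"
  shows "432 * (N * p 2 * p 4 - N * p 3 ^ 2 - p 2 ^ 3) \<le> N ^ 3 * (v - u) ^ 6"
proof -
  define M where "M = (u + v) / 2"
  define h where "h = (v - u) / 2"
  define y where "y i = (x i - M) ^ 2" for i
  define S where "S = (\<Sum>i\<in>A. y i)"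
  have N: "N > 0"
    using assms(1,2) unfolding N_def by (simp add: card_gt_0_iff)
  have y: "0 \<le> y i \<and> y i \<le> h ^ 2" if "i \<in> A" for i
  proof -
    have "\<bar>x i - M\<bar> \<le> h"
      using bounds[OF that] unfolding M_def h_def by (auto simp: abs_le_iff field_simps)
    then show ?thesis
      unfolding y_def by (metis abs_ge_zero power2_abs power_mono zero_le_power2)
  qed
  have "S = (\<Sum>i\<in>A. x i ^ 2 - 2 * M * x i + M ^ 2)"
    unfolding S_def y_def by (rule sum.cong) (simp_all add: power2_eq_square algebra_simps)
  also have "\<dots> = p 2 + N * M ^ 2"
    using centered unfolding p_def N_def by (simp add: sum.distrib sum_subtractf flip: sum_distrib_left)
  finally have S: "S = p 2 + N * M ^ 2" .
  have p2: "0 \<le> p 2"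
    unfolding p_def by (simp add: sum_nonneg)
  have "(\<Sum>i\<in>A. (y i - S / N) ^ 2) = (\<Sum>i\<in>A. (x i ^ 2 + (- 2 * M) * x i + (M ^ 2 - S / N)) ^ 2)"
    unfolding y_def by (rule sum.cong) (simp_all add: power2_eq_square algebra_simps)
  then have "N * p 2 * p 4 - N * p 3 ^ 2 - p 2 ^ 3 \<le> N * p 2 * (\<Sum>i\<in>A. (y i - S / N) ^ 2)"
    using gram_determinant_power_sums_le[OF centered, of "- 2 * M" "M ^ 2 - S / N"]
    unfolding N_def p_def by simp
  also have "\<dots> \<le> N * S * (h ^ 2 * S - S ^ 2 / N)"
  proof (rule mult_mono)
    show "N * p 2 \<le> N * S"
      using N S by simp
    show "(\<Sum>i\<in>A. (y i - S / N) ^ 2) \<le> h ^ 2 * S - S ^ 2 / N"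
      using sum_square_deviation_le[of A y "h ^ 2"] y unfolding N_def S_def by blast
  qed (use N S p2 in \<open>simp_all add: sum_nonneg\<close>)
  also have "\<dots> = S ^ 2 * (N * h ^ 2 - S)"
    using N by (simp add: field_simps power2_eq_square)
  also have "\<dots> \<le> 4 * (N * h ^ 2) ^ 3 / 27"
    using N S p2 by (intro square_mult_complement_le) auto
  also have "\<dots> = N ^ 3 * (v - u) ^ 6 / 432"
    unfolding h_def by (simp add: power_mult_distrib power_divide flip: power_mult)
  finally show ?thesis
    by simp
qed

lemma reflect_poly_linear: "reflect_poly [:- a, 1:] = [:1, - a:]"
  for a :: "'a::comm_ring_1"
  by (intro poly_eqI) (auto simp: coeff_reflect_poly coeff_pCons split: nat.split)

lemma degree_prod_linear_factors:
  "degree (\<Prod>i\<in>A. [:- r i, 1:]) = card A" for r :: "'b \<Rightarrow> 'a::idom"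
  by (cases "finite A") (simp_all add: degree_prod_sum_eq)

text \<open>Read from the top, the coefficients of \<open>\<Prod>(X - r\<^sub>i)\<close> are those of \<open>\<Prod>(1 - r\<^sub>i X)\<close>,
  which are computed by induction from the bottom.\<close>

lemma coeff_prod_linear_factors_reflect:
  fixes r :: "'b \<Rightarrow> 'a::idom"
  assumes "k \<le> card A"
  shows "coeff (\<Prod>i\<in>A. [:- r i, 1:]) (card A - k) = coeff (\<Prod>i\<in>A. [:1, - r i:]) k"
proof -
  have "(\<Prod>i\<in>A. [:1, - r i:]) = reflect_poly (\<Prod>i\<in>A. [:- r i, 1:])"
    by (simp add: reflect_poly_prod reflect_poly_linear)
  then show ?thesis
    using assms by (simp add: coeff_reflect_poly degree_prod_linear_factors)
qed

lemma newton_identities_step: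
  fixes e0 e1 e2 e3 e4 p1 p2 p3 p4 a :: real
  assumes "e0 = 1" "e1 = - p1" "2 * e2 = p1 ^ 2 - p2" "6 * e3 = - (p1 ^ 3 - 3 * p1 * p2 + 2 * p3)"
    "24 * e4 = p1 ^ 4 - 6 * p1 ^ 2 * p2 + 3 * p2 ^ 2 + 8 * p1 * p3 - 6 * p4"
  shows "e1 - a * e0 = - (p1 + a ^ 1)"
    "2 * (e2 - a * e1) = (p1 + a ^ 1) ^ 2 - (p2 + a ^ 2)"
    "6 * (e3 - a * e2) = - ((p1 + a ^ 1) ^ 3 - 3 * (p1 + a ^ 1) * (p2 + a ^ 2) + 2 * (p3 + a ^ 3))"
    "24 * (e4 - a * e3) = (p1 + a ^ 1) ^ 4 - 6 * (p1 + a ^ 1) ^ 2 * (p2 + a ^ 2) + 3 * (p2 + a ^ 2) ^ 2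
      + 8 * (p1 + a ^ 1) * (p3 + a ^ 3) - 6 * (p4 + a ^ 4)"
  using assms by algebra+

lemma coeff_prod_reflected_linear_factors_power_sums:
  fixes r :: "'b \<Rightarrow> real"
  assumes "finite A"
  defines "g \<equiv> \<Prod>i\<in>A. [:1, - r i:]" and "p \<equiv> \<lambda>k. \<Sum>i\<in>A. r i ^ k"
  shows "coeff g 0 = 1 \<and> coeff g 1 = - p 1 \<and> 2 * coeff g 2 = p 1 ^ 2 - p 2 \<and>
    6 * coeff g 3 = - (p 1 ^ 3 - 3 * p 1 * p 2 + 2 * p 3) \<and>
    24 * coeff g 4 = p 1 ^ 4 - 6 * p 1 ^ 2 * p 2 + 3 * p 2 ^ 2 + 8 * p 1 * p 3 - 6 * p 4"
  unfolding g_def p_def using assms(1)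
proof (induction A rule: finite_induct)
  case empty
  then show ?case by simp
next
  case (insert a A)
  let ?g = "\<Prod>i\<in>A. [:1, - r i:]"
  let ?h = "\<Prod>i\<in>insert a A. [:1, - r i:]"
  have g: "coeff ?h k = coeff ?g k - r a * coeff ?g (k - 1)" if "k \<ge> 1" for k
    using insert.hyps that by (cases k) simp_all
  have h: "coeff ?h 0 = coeff ?g 0" "coeff ?h 1 = coeff ?g 1 - r a * coeff ?g 0"
    "coeff ?h 2 = coeff ?g 2 - r a * coeff ?g 1" "coeff ?h 3 = coeff ?g 3 - r a * coeff ?g 2"
    "coeff ?h 4 = coeff ?g 4 - r a * coeff ?g 3"
    using insert.hyps g[of 1] g[of 2] g[of 3] g[of 4] by simp_all
  have p: "(\<Sum>i\<in>insert a A. r i ^ k) = (\<Sum>i\<in>A. r i ^ k) + r a ^ k" for k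
    using insert.hyps by simp
  from insert.IH show ?case
    unfolding p h by (elim conjE) (intro conjI; (assumption | rule newton_identities_step; assumption))
qed

lemma coeff_prod_linear_factors_power_sums:
  fixes r :: "'b \<Rightarrow> real"
  assumes "finite A" "card A \<ge> 4"
  defines "f \<equiv> \<Prod>i\<in>A. [:- r i, 1:]" and "N \<equiv> card A" and "p \<equiv> \<lambda>k. \<Sum>i\<in>A. r i ^ k"
  shows "coeff f (N - 1) = - p 1" "2 * coeff f (N - 2) = p 1 ^ 2 - p 2"
    "6 * coeff f (N - 3) = - (p 1 ^ 3 - 3 * p 1 * p 2 + 2 * p 3)"
    "24 * coeff f (N - 4) = p 1 ^ 4 - 6 * p 1 ^ 2 * p 2 + 3 * p 2 ^ 2 + 8 * p 1 * p 3 - 6 * p 4"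
proof -
  have "coeff f (N - k) = coeff (\<Prod>i\<in>A. [:1, - r i:]) k" if "k \<le> 4" for k
    using coeff_prod_linear_factors_reflect[of k A r] that assms(2) unfolding f_def N_def by simp
  then show "coeff f (N - 1) = - p 1" "2 * coeff f (N - 2) = p 1 ^ 2 - p 2"
    "6 * coeff f (N - 3) = - (p 1 ^ 3 - 3 * p 1 * p 2 + 2 * p 3)"
    "24 * coeff f (N - 4) = p 1 ^ 4 - 6 * p 1 ^ 2 * p 2 + 3 * p 2 ^ 2 + 8 * p 1 * p 3 - 6 * p 4"
    using coeff_prod_reflected_linear_factors_power_sums[OF assms(1), of r] unfolding p_def by auto
qed

lemma map_poly_of_real_mult:
  "map_poly (of_real :: real \<Rightarrow> 'a::{real_algebra_1,comm_ring_1}) (p * q) = map_poly of_real p * map_poly of_real q"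
  by (simp add: poly_eq_iff coeff_map_poly coeff_mult of_real_sum)

lemma map_poly_of_real_prod:
  "map_poly (of_real :: real \<Rightarrow> 'a::{real_algebra_1,comm_ring_1}) (\<Prod>i\<in>A. p i) = (\<Prod>i\<in>A. map_poly of_real (p i))"
  by (induction A rule: infinite_finite_induct) (simp_all add: map_poly_of_real_mult)

lemma map_poly_of_real_eq_iff:
  "map_poly (of_real :: real \<Rightarrow> 'a::real_algebra_1) p = map_poly of_real q \<longleftrightarrow> p = q"
  by (simp add: poly_eq_iff coeff_map_poly)

lemma monic_all_roots_real_splits:
  assumes "degree f = n" "lead_coeff f = 1" "all_roots_real f"
  obtains r :: "nat \<Rightarrow> real" where "f = (\<Prod>i<n. [:- r i, 1:])"
proof -
  define F where "F = map_poly (of_real :: real \<Rightarrow> complex) f"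
  have "degree F = n" "lead_coeff F = 1"
    using assms(1,2) by (simp_all add: F_def degree_map_poly coeff_map_poly)
  moreover obtain z where "smult (lead_coeff F) (\<Prod>i<degree F. [:- z i, 1:]) = F"
    using complex_poly_decompose' by blast
  ultimately have F: "F = (\<Prod>i<n. [:- z i, 1:])"
    by simp
  have "z i \<in> \<real>" if "i < n" for i
  proof -
    have "poly F (z i) = 0"
      unfolding F poly_prod using that by (intro prod_zero) auto
    then show ?thesis
      using assms(3) unfolding all_roots_real_def F_def by blast
  qed
  then have "F = (\<Prod>i<n. map_poly of_real [:- Re (z i), 1:])"
    unfolding F by (intro prod.cong) (auto simp: map_poly_pCons complex_is_Real_iff)
  then have "map_poly of_real f = map_poly (of_real :: real \<Rightarrow> complex) (\<Prod>i<n. [:- Re (z i), 1:])"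
    unfolding F_def map_poly_of_real_prod .
  then have "f = (\<Prod>i<n. [:- Re (z i), 1:])"
    by (simp only: map_poly_of_real_eq_iff)
  then show ?thesis
    by (rule that)
qed

lemma root_dist_le_spn:
  assumes "f \<noteq> 0" "poly f x = 0" "poly f y = 0"
  shows "\<bar>x - y\<bar> \<le> spn f"
proof -
  have "finite {\<bar>x - y\<bar> | x y. poly f x = 0 \<and> poly f y = 0}"
    using poly_roots_finite[OF assms(1)] by (intro finite_image_set2) auto
  then show ?thesis
    unfolding spn_def using assms(2,3) by (intro Max_ge) auto
qed

lemma power_sums_le_spn:
  fixes r :: "'a \<Rightarrow> real"
  assumes "finite A" "A \<noteq> {}" "(\<Sum>i\<in>A. r i) = 0"
  defines "N \<equiv> real (card A)" and "p \<equiv> \<lambda>k. \<Sum>i\<in>A. r i ^ k"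
  shows "root 6 (432 * (N * p 2 * p 4 - N * p 3 ^ 2 - p 2 ^ 3) / N ^ 3) \<le> spn (\<Prod>i\<in>A. [:- r i, 1:])"
proof -
  let ?f = "\<Prod>i\<in>A. [:- r i, 1:]"
  define u where "u = Min (r ` A)"
  define v where "v = Max (r ` A)"
  have bounds: "u \<le> r i \<and> r i \<le> v" if "i \<in> A" for i
    using assms(1) that unfolding u_def v_def by simp
  have "u \<in> r ` A" "v \<in> r ` A"
    using assms(1,2) unfolding u_def v_def by simp_all
  then obtain iu iv where "iu \<in> A" "r iu = u" "iv \<in> A" "r iv = v"
    by blast
  have N: "N > 0"
    using assms(1,2) unfolding N_def by (simp add: card_gt_0_iff)
  have "root 6 (432 * (N * p 2 * p 4 - N * p 3 ^ 2 - p 2 ^ 3) / N ^ 3) \<le> root 6 ((v - u) ^ 6)"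
    using power_sums_spread_bound[OF assms(1-3) bounds] N unfolding N_def p_def
    by (simp add: divide_le_eq mult.commute)
  also have "\<dots> = v - u"
    using bounds[OF \<open>iu \<in> A\<close>] \<open>r iu = u\<close> by (simp add: real_root_power_cancel)
  also have "\<dots> \<le> \<bar>v - u\<bar>"
    by simp
  also have "\<dots> \<le> spn ?f"
    using root_dist_le_spn[of ?f v u] assms(1) \<open>iu \<in> A\<close> \<open>r iu = u\<close> \<open>iv \<in> A\<close> \<open>r iv = v\<close>
    unfolding poly_prod by (auto intro: prod_zero)
  finally show ?thesis .
qed

theorem theorem4p2:
  fixes f :: "real poly" and n :: nat
  assumes "n \<ge> 5"
    and "degree f = n"
    and "lead_coeff f = 1"
    and "coeff f (n - 1) = 0"
    and "all_roots_real f"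
  shows "spn f \<ge> root 6 ((432 / real n ^ 3) *
           (4 * (2 - real n) * coeff f (n - 2) ^ 3
            - 9 * real n * coeff f (n - 3) ^ 2
            + 8 * real n * coeff f (n - 2) * coeff f (n - 4)))"
proof -
  obtain r where f: "f = (\<Prod>i<n. [:- r i, 1:])"
    using monic_all_roots_real_splits assms(2,3,5) by blast
  define p where "p k = (\<Sum>i<n. r i ^ k)" for k
  have "4 \<le> card {..<n}"
    using assms(1) by simp
  note newton = coeff_prod_linear_factors_power_sums[OF finite_lessThan this, of r,
      unfolded card_lessThan, folded f p_def]
  have p1: "p 1 = 0"
    using newton(1) assms(1,4) by simp
  have a: "coeff f (n - 2) = - p 2 / 2" "coeff f (n - 3) = - p 3 / 3"
    "coeff f (n - 4) = (3 * p 2 ^ 2 - 6 * p 4) / 24"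
    using newton(2-4) assms(1) p1 by simp_all
  have "(432 / real n ^ 3) * (4 * (2 - real n) * coeff f (n - 2) ^ 3
      - 9 * real n * coeff f (n - 3) ^ 2 + 8 * real n * coeff f (n - 2) * coeff f (n - 4))
    = 432 * (real n * p 2 * p 4 - real n * p 3 ^ 2 - p 2 ^ 3) / real n ^ 3"
    unfolding a using assms(1) by (simp add: field_simps power2_eq_square power3_eq_cube)
  also have "root 6 \<dots> \<le> spn f"
    using power_sums_le_spn[of "{..<n}" r] p1 assms(1)
    unfolding p_def f by (simp add: lessThan_empty_iff)
  finally show ?thesis .
qed

end
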